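(* Let $U^{(n)}$ be uniformly distributed on $\{1,\dots,n\}$ and put $\widetilde U^{(n)}:=\prod_{p\le n,\ p\ \text{prime}}p^{\mathbbm{1}_{\{\lambda_p(U^{(n)})\ge1\}}}$. Then, as $n\to\infty$, $$\mathbb{E}\bigl(\log U^{(n)}-\log\widetilde U^{(n)}\bigr)^4=O(1)$$ and $$\mathbb{E}\bigl(\log U^{(n)}-\log\widetilde U^{(n)}-\mathbb{E}\log U^{(n)}+\mathbb{E}\log\widetilde U^{(n)}\bigr)^4=O(1).$$
   Context: For a prime $p$ and $k\in\mathbb{N}$, $\lambda_p(k)$ is the exponent of $p$ in the prime factorization of $k$, i.e. $k=\prod_p p^{\lambda_p(k)}$. *)

theory Defs
  imports "HOL-Probability.Probability" "HOL-Computational_Algebra.Primes" "HOL-Library.Landau_Symbols"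
begin

definition utilde :: "nat \<Rightarrow> nat \<Rightarrow> nat" where
  "utilde n k = (\<Prod>p\<in>{p. prime p \<and> p \<le> n}. p ^ (if multiplicity p k \<ge> 1 then 1 else 0))"

definition EU :: "nat \<Rightarrow> (nat \<Rightarrow> real) \<Rightarrow> real" where
  "EU n f = measure_pmf.expectation (pmf_of_set {1..n}) f"

end

theory Submission
  imports Defs "HOL-Computational_Algebra.Squarefree" "HOL-Real_Asymp.Real_Asymp"
begin

text \<open>Write \<open>k = s a\<^sup>2\<close> with \<open>s\<close> squarefree. Then \<open>s\<close> divides the radical \<open>rad k\<close>, so
  \<open>0 \<le> log k - log (rad k) \<le> 2 log a\<close> where \<open>a\<^sup>2\<close> divides \<open>k\<close>. As at most \<open>n / a\<^sup>2\<close> of the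
  numbers \<open>k \<le> n\<close> are multiples of \<open>a\<^sup>2\<close>, the sum of \<open>(log k - log (rad k))\<^sup>4\<close> over \<open>k \<le> n\<close>
  is at most \<open>n\<close> times the convergent series \<open>\<Sum>\<^sub>a (2 log a)\<^sup>4 / a\<^sup>2\<close>. On \<open>{1..n}\<close> the
  radical coincides with \<open>utilde n\<close>. The centred fourth moment is at most 16 times the plain one,
  by \<open>(x - y)\<^sup>4 \<le> 8 (x\<^sup>4 + y\<^sup>4)\<close> and Jensen's inequality.\<close>

definition rad :: "nat \<Rightarrow> nat" where
  "rad k = (\<Prod>p\<in>prime_factors k. p)"

lemma rad_pos: "rad k > 0"
  unfolding rad_def by (intro prod_pos) (auto dest: in_prime_factors_imp_prime prime_gt_0_nat)

lemma multiplicity_rad: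
  assumes "prime p"
  shows "multiplicity p (rad k) = (if p \<in> prime_factors k then 1 else 0)"
  using multiplicity_prod_prime_powers[of "prime_factors k" p "\<lambda>_. 1"] assms
  by (simp add: rad_def in_prime_factors_imp_prime)

lemma rad_dvd: "k \<noteq> 0 \<Longrightarrow> rad k dvd k"
  using rad_pos[of k]
  by (subst prime_multiplicity_le_imp_dvd)
     (auto simp: multiplicity_rad prime_factors_multiplicity Suc_le_eq prime_multiplicity_gt_zero_iff)

lemma squarefree_part_dvd_rad: "k \<noteq> 0 \<Longrightarrow> squarefree_part k dvd rad k"
  using rad_pos[of k]
  by (subst prime_multiplicity_le_imp_dvd)
     (auto simp: multiplicity_rad prime_factors_multiplicity prime_multiplicity_squarefree_part)

lemma utilde_eq_rad:
  assumes "0 < k" "k \<le> n"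
  shows "utilde n k = rad k"
proof (rule multiplicity_eq_nat)
  show "utilde n k > 0"
    unfolding utilde_def by (intro prod_pos) (auto dest: prime_gt_0_nat)
  fix p :: nat assume "prime p"
  have "p \<in> prime_factors k \<longleftrightarrow> p \<le> n \<and> 1 \<le> multiplicity p k"
    using assms \<open>prime p\<close> dvd_imp_le[of p k]
    by (auto simp: prime_factors_multiplicity Suc_le_eq prime_multiplicity_gt_zero_iff)
  then show "multiplicity p (utilde n k) = multiplicity p (rad k)"
    unfolding utilde_def using \<open>prime p\<close>
    by (subst multiplicity_prod_prime_powers) (auto simp: multiplicity_rad)
qed (rule rad_pos)

lemma ln_sub_ln_rad_nonneg: "k > 0 \<Longrightarrow> 0 \<le> ln (real k) - ln (real (rad k))"
  using dvd_imp_le[OF rad_dvd[of k]] rad_pos[of k] by simp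

lemma ln_sub_ln_rad_le_ln_square_part:
  assumes "k > 0"
  shows "ln (real k) - ln (real (rad k)) \<le> 2 * ln (real (square_part k))"
proof -
  have "squarefree_part k \<le> rad k"
    using squarefree_part_dvd_rad[of k] rad_pos[of k] assms by (auto intro: dvd_imp_le)
  then have "real k \<le> real (rad k) * real (square_part k) ^ 2"
    using squarefree_decompose[of k] by (metis of_nat_le_iff of_nat_mult of_nat_power mult_le_mono1)
  then have "ln (real k) \<le> ln (real (rad k) * real (square_part k) ^ 2)"
    using assms by simp
  also have "\<dots> = ln (real (rad k)) + 2 * ln (real (square_part k))"
    using rad_pos[of k] assms by (simp add: ln_mult ln_realpow)
  finally show ?thesis by simp
qed

lemma card_multiples_le:
  assumes "d > 0"
  shows "card {k\<in>{1..n}. d dvd k} \<le> n div d"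
proof -
  have "{k\<in>{1..n}. d dvd k} \<subseteq> (\<lambda>j. d * j) ` {1..n div d}"
    using assms by (auto elim!: dvdE simp: image_iff less_eq_div_iff_mult_less_eq mult.commute)
  then have "card {k\<in>{1..n}. d dvd k} \<le> card ((\<lambda>j. d * j) ` {1..n div d})"
    by (intro card_mono) auto
  also have "\<dots> \<le> n div d"
    using card_image_le[of "{1..n div d}" "\<lambda>j. d * j"] by simp
  finally show ?thesis .
qed

lemma sum_square_part_le:
  fixes g :: "nat \<Rightarrow> real"
  assumes "\<And>a. 0 \<le> g a"
  shows "(\<Sum>k=1..n. g (square_part k)) \<le> real n * (\<Sum>a=1..n. g a / real a ^ 2)"
proof -
  have "(\<Sum>k=1..n. g (square_part k)) \<le> (\<Sum>k=1..n. \<Sum>a\<in>{a\<in>{1..n}. a ^ 2 dvd k}. g a)"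
  proof (intro sum_mono member_le_sum)
    fix k assume "k \<in> {1..n}"
    moreover have "square_part k \<le> square_part k ^ 2" by (simp add: power2_eq_square)
    moreover have "square_part k ^ 2 \<le> k" using \<open>k \<in> {1..n}\<close> by (intro dvd_imp_le) auto
    ultimately show "square_part k \<in> {a\<in>{1..n}. a ^ 2 dvd k}"
      by (auto simp: Suc_le_eq intro!: gr0I)
  qed (use assms in auto)
  also have "\<dots> = (\<Sum>a=1..n. g a * real (card {k\<in>{1..n}. a ^ 2 dvd k}))"
    by (subst sum.swap_restrict) (auto simp: mult.commute)
  also have "\<dots> \<le> (\<Sum>a=1..n. g a * (real n / real a ^ 2))"
  proof (intro sum_mono mult_left_mono)
    fix a assume "a \<in> {1..n}"
    then have "real (card {k\<in>{1..n}. a ^ 2 dvd k}) \<le> real (n div a ^ 2)"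
      using card_multiples_le[of "a ^ 2" n] by simp
    also have "\<dots> \<le> real n / real a ^ 2"
      by (metis of_nat_div_le_of_nat of_nat_power)
    finally show "real (card {k\<in>{1..n}. a ^ 2 dvd k}) \<le> real n / real a ^ 2" .
  qed (use assms in auto)
  also have "\<dots> = real n * (\<Sum>a=1..n. g a / real a ^ 2)"
    by (simp add: sum_distrib_left mult.commute)
  finally show ?thesis .
qed

lemma summable_ln_power_over_square: "summable (\<lambda>a. ln (real a) ^ m / real a ^ 2)"
proof (rule summable_comparison_test_bigo)
  show "summable (\<lambda>a. norm (real a powr (-3/2)))"
    by (simp add: summable_real_powr_iff)
  show "(\<lambda>a. ln (real a) ^ m / real a ^ 2) \<in> O(\<lambda>a. real a powr (-3/2))"
    by real_asymp
qed

lemma sum_ln_sub_ln_rad_power4_le: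
  "(\<Sum>k=1..n. (ln (real k) - ln (real (rad k))) ^ 4)
     \<le> real n * (\<Sum>a. (2 * ln (real a)) ^ 4 / real a ^ 2)"
proof -
  have summable: "summable (\<lambda>a. (2 * ln (real a)) ^ 4 / real a ^ 2)"
    using summable_mult[OF summable_ln_power_over_square[of 4], of 16]
    by (simp add: power_mult_distrib mult_ac)
  have "(\<Sum>k=1..n. (ln (real k) - ln (real (rad k))) ^ 4)
          \<le> (\<Sum>k=1..n. (2 * ln (real (square_part k))) ^ 4)"
    by (intro sum_mono power_mono ln_sub_ln_rad_nonneg ln_sub_ln_rad_le_ln_square_part) auto
  also have "\<dots> \<le> real n * (\<Sum>a=1..n. (2 * ln (real a)) ^ 4 / real a ^ 2)"
    by (rule sum_square_part_le) simp
  also have "\<dots> \<le> real n * (\<Sum>a. (2 * ln (real a)) ^ 4 / real a ^ 2)"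
    by (intro mult_left_mono sum_le_suminf summable) auto
  finally show ?thesis .
qed

lemma power4_diff_le: "((x::real) - y) ^ 4 \<le> 8 * (x ^ 4 + y ^ 4)"
proof -
  have "(x - y) ^ 2 \<le> 2 * (x ^ 2 + y ^ 2)"
    using zero_le_square[of "x + y"] by (simp add: power2_eq_square algebra_simps)
  then have "(x - y) ^ 4 \<le> (2 * (x ^ 2 + y ^ 2)) ^ 2"
    using power_mono[of "(x - y) ^ 2" _ 2] by (simp add: power_mult[symmetric])
  also have "\<dots> \<le> 8 * (x ^ 4 + y ^ 4)"
    using zero_le_square[of "x ^ 2 - y ^ 2"] by (simp add: power2_eq_square algebra_simps power4_eq_xxxx)
  finally show ?thesis .
qed

lemma (in prob_space) expectation_centered_power4_le:
  fixes X :: "'a \<Rightarrow> real"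
  assumes X: "integrable M X" and X4: "integrable M (\<lambda>x. X x ^ 4)"
  shows "expectation (\<lambda>x. (X x - expectation X) ^ 4) \<le> 16 * expectation (\<lambda>x. X x ^ 4)"
proof -
  let ?c = "expectation X"
  have jensen: "?c ^ 4 \<le> expectation (\<lambda>x. X x ^ 4)"
    using X X4 by (intro jensens_inequality[where I = UNIV]) (auto intro: convex_power_even)
  have bound: "integrable M (\<lambda>x. 8 * (X x ^ 4 + ?c ^ 4))"
    using X4 by auto
  have "integrable M (\<lambda>x. (X x - ?c) ^ 4)"
  proof (rule Bochner_Integration.integrable_bound[OF bound])
    show "(\<lambda>x. (X x - ?c) ^ 4) \<in> borel_measurable M"
      using borel_measurable_integrable[OF X] by measurable
    show "AE x in M. norm ((X x - ?c) ^ 4) \<le> norm (8 * (X x ^ 4 + ?c ^ 4))"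
      using power4_diff_le by (simp add: abs_of_nonneg add_nonneg_nonneg)
  qed
  then have "expectation (\<lambda>x. (X x - ?c) ^ 4) \<le> expectation (\<lambda>x. 8 * (X x ^ 4 + ?c ^ 4))"
    using bound power4_diff_le by (intro integral_mono)
  also have "\<dots> = 8 * (expectation (\<lambda>x. X x ^ 4) + ?c ^ 4)"
    using X4 by (simp add: prob_space)
  also have "\<dots> \<le> 16 * expectation (\<lambda>x. X x ^ 4)"
    using jensen by simp
  finally show ?thesis .
qed

lemma EU_eq_average: "n \<ge> 1 \<Longrightarrow> EU n f = (\<Sum>k=1..n. f k) / real n"
  unfolding EU_def by (subst integral_pmf_of_set) auto

lemma EU_nonneg: "(\<And>k. 0 \<le> f k) \<Longrightarrow> 0 \<le> EU n f"
  unfolding EU_def by (rule Bochner_Integration.integral_nonneg)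

lemma EU_diff: "n \<ge> 1 \<Longrightarrow> EU n f - EU n g = EU n (\<lambda>k. f k - g k)"
  by (simp add: EU_eq_average sum_subtractf diff_divide_distrib)

lemma EU_centered_power4_le:
  "n \<ge> 1 \<Longrightarrow> EU n (\<lambda>k. (f k - EU n f) ^ 4) \<le> 16 * EU n (\<lambda>k. f k ^ 4)"
  unfolding EU_def
  by (intro prob_space.expectation_centered_power4_le prob_space_measure_pmf
        integrable_measure_pmf_finite) auto

lemma EU_ln_sub_ln_utilde_power4_le:
  assumes "n \<ge> 1"
  shows "EU n (\<lambda>k. (ln (real k) - ln (real (utilde n k))) ^ 4)
           \<le> (\<Sum>a. (2 * ln (real a)) ^ 4 / real a ^ 2)"
proof -
  have "(\<Sum>k=1..n. (ln (real k) - ln (real (utilde n k))) ^ 4)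
          = (\<Sum>k=1..n. (ln (real k) - ln (real (rad k))) ^ 4)"
    by (intro sum.cong) (auto simp: utilde_eq_rad)
  then show ?thesis
    using sum_ln_sub_ln_rad_power4_le[of n] assms
    by (simp add: EU_eq_average divide_le_eq mult.commute)
qed

theorem lemma5p3:
  shows "(\<lambda>n. EU n (\<lambda>k. (ln (real k) - ln (real (utilde n k))) ^ 4))
           \<in> O[sequentially](\<lambda>_. 1) \<and>
         (\<lambda>n. EU n (\<lambda>k. (ln (real k) - ln (real (utilde n k))
                          - EU n (\<lambda>j. ln (real j)) + EU n (\<lambda>j. ln (real (utilde n j)))) ^ 4))
           \<in> O[sequentially](\<lambda>_. 1)"
proof -
  define C where "C = (\<Sum>a. (2 * ln (real a)) ^ 4 / real a ^ 2)"
  define X where "X n k = ln (real k) - ln (real (utilde n k))" for n k :: nat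
  have bounded: "f \<in> O[sequentially](\<lambda>_. 1)" if "\<And>n. n \<ge> 1 \<Longrightarrow> 0 \<le> f n \<and> f n \<le> B"
    for f :: "nat \<Rightarrow> real" and B
    using that by (intro bigoI[where c = B] eventually_mono[OF eventually_ge_at_top[of 1]]) auto
  have moment: "EU n (\<lambda>k. X n k ^ 4) \<le> C" if "n \<ge> 1" for n
    using EU_ln_sub_ln_utilde_power4_le[OF that] by (simp add: X_def C_def)
  have shift: "X n k - EU n (\<lambda>j. ln (real j)) + EU n (\<lambda>j. ln (real (utilde n j)))
                 = X n k - EU n (X n)" if "n \<ge> 1" for n k
    using that by (simp add: X_def[abs_def] EU_diff[symmetric])
  have centered: "EU n (\<lambda>k. (X n k - EU n (\<lambda>j. ln (real j))
                     + EU n (\<lambda>j. ln (real (utilde n j)))) ^ 4) \<le> 16 * C" if "n \<ge> 1" for n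
    unfolding shift[OF that] using EU_centered_power4_le[OF that, of "X n"] moment[OF that]
    by linarith
  show ?thesis
    using moment centered unfolding X_def by (auto intro!: bounded EU_nonneg)
qed

end
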